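(* For every sequent $\Gamma\Rightarrow\Delta$ of $\mathtt{TPDL}$: if $\Gamma\Rightarrow\Delta$ is valid, then $\Gamma\Rightarrow\Delta$ is provable in $\mathtt{GTPDL}$.
   Context: Fix sets $\mathsf{Prop}$ of propositional variables and $\mathsf{AtProg}$ of atomic programs. Formulas and programs of $\mathtt{TPDL}$ are defined by mutual induction: $\varphi ::= \bot \mid p \mid (\varphi\to\varphi) \mid [\pi]\varphi \mid [\pi]^{\leftarrow}\varphi$ and $\pi ::= \alpha \mid \pi;\pi \mid \pi\cup\pi \mid \pi^{*} \mid \varphi?$, where $p\in\mathsf{Prop}$, $\alpha\in\mathsf{AtProg}$. Abbreviations: $\neg\varphi:=\varphi\to\bot$; for a set $\Gamma$, $[\pi]\Gamma=\{[\pi]\varphi:\varphi\in\Gamma\}$, $[\pi]^{\leftarrow}\Gamma=\{[\pi]^{\leftarrow}\varphi:\varphi\in\Gamma\}$. A model is $M=(W,(R_\alpha)_{\alpha\in\mathsf{AtProg}},V)$, $W\neq\emptyset$, $R_\alpha\subseteq W\times W$, $V:W\to\mathcal P(\mathsf{Prop})$. $R_{\pi_0;\pi_1}$ is relational composition, $R_{\pi_0\cup\pi_1}=R_{\pi_0}\cup R_{\pi_1}$, $R_{\pi^*}$ the reflexive–transitive closure of $R_\pi$, $R_{\psi?}=\{(w,w):M,w\models\psi\}$. $M,w\not\models\bot$; $M,w\models p$ iff $p\in V(w)$; $\to$ classical; $M,w\models[\pi]\varphi$ iff $M,v\models\varphi$ whenever $wR_\pi v$; $M,w\models[\pi]^{\leftarrow}\varphi$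 iff $M,v\models\varphi$ whenever $vR_\pi w$. A sequent $\Gamma\Rightarrow\Delta$ is a pair of finite sets of formulas; it is valid if in every model at every state, truth of all formulas of $\Gamma$ implies truth of some formula of $\Delta$. $\mathtt{GTPDL}$ rules (premises / conclusion): (Ax) / $\Gamma\Rightarrow\Delta$ with $\Gamma\cap\Delta\neq\emptyset$; ($\bot$) / $\Gamma,\bot\Rightarrow\Delta$; ($\to$L) $\Gamma\Rightarrow\varphi,\Delta$ and $\Gamma,\psi\Rightarrow\Delta$ / $\Gamma,\varphi\to\psi\Rightarrow\Delta$; ($\to$R) $\Gamma,\varphi\Rightarrow\psi,\Delta$ / $\Gamma\Rightarrow\varphi\to\psi,\Delta$; (Wk) $\Gamma\Rightarrow\Delta$ / $\Gamma'\Rightarrow\Delta'$ with $\Gamma\subseteq\Gamma',\Delta\subseteq\Delta'$; (Cut) $\Gamma\Rightarrow\varphi,\Delta$ and $\Gamma,\varphi\Rightarrow\Delta$ / $\Gamma\Rightarrow\Delta$; ($[\,]$) $\Gamma\Rightarrow\varphi,[\pi]^{\leftarrow}\Delta$ / $[\pi]\Gamma\Rightarrow[\pi]\varphi,\Delta$; ($[\,]^{\leftarrow}$) $\Gamma\Rightarrow\varphi,[\pi]\Delta$ / $[\pi]^{\leftarrow}\Gamma\Rightarrow[\pi]^{\leftarrow}\varphi,\Delta$; ($[;]$L) $\Gamma,[\pi_0][\pi_1]\varphi\Rightarrow\Delta$ / $\Gamma,[\pi_0;\pi_1]\varphi\Rightarrow\Delta$; ($[;]$R) $\Gamma\Rightarrow[\pi_0][\pi_1]\varphi,\Delta$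 / $\Gamma\Rightarrow[\pi_0;\pi_1]\varphi,\Delta$; ($[\cup]$L) $\Gamma,[\pi_0]\varphi,[\pi_1]\varphi\Rightarrow\Delta$ / $\Gamma,[\pi_0\cup\pi_1]\varphi\Rightarrow\Delta$; ($[\cup]$R) $\Gamma\Rightarrow\Delta,[\pi_0]\varphi$ and $\Gamma\Rightarrow\Delta,[\pi_1]\varphi$ / $\Gamma\Rightarrow[\pi_0\cup\pi_1]\varphi,\Delta$; ($[*]$L) $\Gamma,\varphi,[\pi][\pi^*]\varphi\Rightarrow\Delta$ / $\Gamma,[\pi^*]\varphi\Rightarrow\Delta$; ($[*]$R) $\Gamma,\varphi\Rightarrow[\pi]\varphi$ / $[\pi^*]\Gamma,\varphi\Rightarrow[\pi^*]\varphi$; ($[?]$L) $\Gamma\Rightarrow\varphi,\Delta$ and $\Gamma,\psi\Rightarrow\Delta$ / $\Gamma,[\varphi?]\psi\Rightarrow\Delta$; ($[?]$R) $\Gamma,\varphi\Rightarrow\psi,\Delta$ / $\Gamma\Rightarrow[\varphi?]\psi,\Delta$. A $\mathtt{GTPDL}$ proof is a finite tree of sequents, each node the conclusion of a rule instance whose premises are its children (leaves are Ax or $\bot$ instances); provable means having such a proof with the given sequent at the root. *)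

theory Defs
  imports Main
begin

datatype ('p, 'a) fm =
    Bot
  | Atom 'p
  | Imp "('p, 'a) fm" "('p, 'a) fm"
  | Box "('p, 'a) pg" "('p, 'a) fm"
  | BoxC "('p, 'a) pg" "('p, 'a) fm"
and ('p, 'a) pg =
    At 'a
  | Seq "('p, 'a) pg" "('p, 'a) pg"
  | Ch "('p, 'a) pg" "('p, 'a) pg"
  | Star "('p, 'a) pg"
  | Test "('p, 'a) fm"

record ('w, 'p, 'a) model =
  W :: "'w set"
  R :: "'a \<Rightarrow> ('w \<times> 'w) set"
  V :: "'w \<Rightarrow> 'p set"

definition is_model :: "('w, 'p, 'a) model \<Rightarrow> bool" where
  "is_model M \<longleftrightarrow> W M \<noteq> {} \<and> (\<forall>a. R M a \<subseteq> W M \<times> W M)"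

fun sat :: "('w, 'p, 'a) model \<Rightarrow> 'w \<Rightarrow> ('p, 'a) fm \<Rightarrow> bool"
and rel :: "('w, 'p, 'a) model \<Rightarrow> ('p, 'a) pg \<Rightarrow> ('w \<times> 'w) set" where
  "sat M w Bot = False"
| "sat M w (Atom p) = (p \<in> V M w)"
| "sat M w (Imp f g) = (sat M w f \<longrightarrow> sat M w g)"
| "sat M w (Box \<pi> f) = (\<forall>v. (w, v) \<in> rel M \<pi> \<longrightarrow> sat M v f)"
| "sat M w (BoxC \<pi> f) = (\<forall>v. (v, w) \<in> rel M \<pi> \<longrightarrow> sat M v f)"
| "rel M (At a) = R M a"
| "rel M (Seq \<pi>0 \<pi>1) = rel M \<pi>0 O rel M \<pi>1"
| "rel M (Ch \<pi>0 \<pi>1) = rel M \<pi>0 \<union> rel M \<pi>1"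
| "rel M (Star \<pi>) = Id_on (W M) \<union> (rel M \<pi>)\<^sup>+"
| "rel M (Test f) = {(w, w) | w. w \<in> W M \<and> sat M w f}"

definition valid_over :: "'w itself \<Rightarrow> ('p, 'a) fm set \<Rightarrow> ('p, 'a) fm set \<Rightarrow> bool" where
  "valid_over _ \<Gamma> \<Delta> \<longleftrightarrow>
     (\<forall>(M :: ('w, 'p, 'a) model) w. is_model M \<longrightarrow> w \<in> W M \<longrightarrow>
        (\<forall>f\<in>\<Gamma>. sat M w f) \<longrightarrow> (\<exists>g\<in>\<Delta>. sat M w g))"

definition valid :: "('p, 'a) fm set \<Rightarrow> ('p, 'a) fm set \<Rightarrow> bool" where
  "valid \<Gamma> \<Delta> \<longleftrightarrow> valid_over TYPE(('p, 'a) fm set) \<Gamma> \<Delta>"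

definition boxes :: "('p, 'a) pg \<Rightarrow> ('p, 'a) fm set \<Rightarrow> ('p, 'a) fm set" where
  "boxes \<pi> \<Gamma> = Box \<pi> ` \<Gamma>"

definition boxesC :: "('p, 'a) pg \<Rightarrow> ('p, 'a) fm set \<Rightarrow> ('p, 'a) fm set" where
  "boxesC \<pi> \<Gamma> = BoxC \<pi> ` \<Gamma>"

inductive prov :: "('p, 'a) fm set \<Rightarrow> ('p, 'a) fm set \<Rightarrow> bool" where
  Ax: "finite \<Gamma> \<Longrightarrow> finite \<Delta> \<Longrightarrow> \<Gamma> \<inter> \<Delta> \<noteq> {} \<Longrightarrow> prov \<Gamma> \<Delta>"
| BotL: "finite \<Gamma> \<Longrightarrow> finite \<Delta> \<Longrightarrow> prov (insert Bot \<Gamma>) \<Delta>"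
| ImpL: "prov \<Gamma> (insert f \<Delta>) \<Longrightarrow> prov (insert g \<Gamma>) \<Delta> \<Longrightarrow> prov (insert (Imp f g) \<Gamma>) \<Delta>"
| ImpR: "prov (insert f \<Gamma>) (insert g \<Delta>) \<Longrightarrow> prov \<Gamma> (insert (Imp f g) \<Delta>)"
| Wk: "prov \<Gamma> \<Delta> \<Longrightarrow> \<Gamma> \<subseteq> \<Gamma>' \<Longrightarrow> \<Delta> \<subseteq> \<Delta>' \<Longrightarrow> finite \<Gamma>' \<Longrightarrow> finite \<Delta>' \<Longrightarrow> prov \<Gamma>' \<Delta>'"
| Cut: "prov \<Gamma> (insert f \<Delta>) \<Longrightarrow> prov (insert f \<Gamma>) \<Delta> \<Longrightarrow> prov \<Gamma> \<Delta>"
| BoxR: "prov \<Gamma> (insert f (boxesC \<pi> \<Delta>)) \<Longrightarrow> prov (boxes \<pi> \<Gamma>) (insert (Box \<pi> f) \<Delta>)"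
| BoxCR: "prov \<Gamma> (insert f (boxes \<pi> \<Delta>)) \<Longrightarrow> prov (boxesC \<pi> \<Gamma>) (insert (BoxC \<pi> f) \<Delta>)"
| SeqL: "prov (insert (Box \<pi>0 (Box \<pi>1 f)) \<Gamma>) \<Delta> \<Longrightarrow> prov (insert (Box (Seq \<pi>0 \<pi>1) f) \<Gamma>) \<Delta>"
| SeqR: "prov \<Gamma> (insert (Box \<pi>0 (Box \<pi>1 f)) \<Delta>) \<Longrightarrow> prov \<Gamma> (insert (Box (Seq \<pi>0 \<pi>1) f) \<Delta>)"
| ChL: "prov (insert (Box \<pi>0 f) (insert (Box \<pi>1 f) \<Gamma>)) \<Delta> \<Longrightarrow> prov (insert (Box (Ch \<pi>0 \<pi>1) f) \<Gamma>) \<Delta>"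
| ChR: "prov \<Gamma> (insert (Box \<pi>0 f) \<Delta>) \<Longrightarrow> prov \<Gamma> (insert (Box \<pi>1 f) \<Delta>) \<Longrightarrow> prov \<Gamma> (insert (Box (Ch \<pi>0 \<pi>1) f) \<Delta>)"
| StarL: "prov (insert f (insert (Box \<pi> (Box (Star \<pi>) f)) \<Gamma>)) \<Delta> \<Longrightarrow> prov (insert (Box (Star \<pi>) f) \<Gamma>) \<Delta>"
| StarR: "prov (insert f \<Gamma>) {Box \<pi> f} \<Longrightarrow> prov (insert f (boxes (Star \<pi>) \<Gamma>)) {Box (Star \<pi>) f}"
| TestL: "prov \<Gamma> (insert f \<Delta>) \<Longrightarrow> prov (insert g \<Gamma>) \<Delta> \<Longrightarrow> prov (insert (Box (Test f) g) \<Gamma>) \<Delta>"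
| TestR: "prov (insert f \<Gamma>) (insert g \<Delta>) \<Longrightarrow> prov \<Gamma> (insert (Box (Test f) g) \<Delta>)"

end

theory Submission
  imports Defs
begin

(*
  Completeness via a finite canonical model. Let C be a finite set containing the sequent and
  closed under Fischer-Ladner successors (for the converse boxes as well). The worlds are the
  atoms, the subsets A of C with A => C - A unprovable, each described by its characteristic
  formula; every unprovable sequent inside C extends to an atom by a Lindenbaum argument. The
  truth lemma (membership in an atom is truth in the canonical model) goes by mutual induction on
  formulas and programs, the program part stating that atoms whose characteristic formulas are
  pi-consistent are pi-related, and that pi-related atoms respect [pi] and [pi]^-. Two points are
  specific to the tense setting: the unfolding rules for [pi]^-, which the calculus does not have,
  are derived from those for [pi] with the tense axiom f -> [pi]<pi>^- f; and in the star case the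
  induction rule for [p*] is applied to the disjunction of the characteristic formulas of the
  atoms reachable along p.
*)

abbreviation neg :: "('p, 'a) fm \<Rightarrow> ('p, 'a) fm" where
  "neg f \<equiv> Imp f Bot"

lemma prov_finite:
  assumes "prov \<Gamma> \<Delta>"
  shows "finite \<Gamma>" and "finite \<Delta>"
proof -
  from assms have "finite \<Gamma> \<and> finite \<Delta>"
    by (induction rule: prov.induct) (auto simp: boxes_def boxesC_def finite_image_iff inj_on_def)
  then show "finite \<Gamma>" and "finite \<Delta>"
    by auto
qed

lemma prov_insertL: "prov \<Gamma> \<Delta> \<Longrightarrow> prov (insert f \<Gamma>) \<Delta>"
  by (rule Wk) (auto dest: prov_finite)

lemma prov_insertR: "prov \<Gamma> \<Delta> \<Longrightarrow> prov \<Gamma> (insert f \<Delta>)"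
  by (rule Wk) (auto dest: prov_finite)

lemma prov_mem: "finite \<Gamma> \<Longrightarrow> finite \<Delta> \<Longrightarrow> f \<in> \<Gamma> \<Longrightarrow> f \<in> \<Delta> \<Longrightarrow> prov \<Gamma> \<Delta>"
  using Ax by blast

lemma prov_cutR:
  assumes ab: "prov {a} {b}" and a: "prov \<Gamma> (insert a \<Delta>)"
  shows "prov \<Gamma> (insert b \<Delta>)"
proof (rule Cut[of _ a])
  show "prov \<Gamma> (insert a (insert b \<Delta>))"
    using prov_insertR[OF a, of b] by (simp add: insert_commute)
  show "prov (insert a \<Gamma>) (insert b \<Delta>)"
    by (rule Wk[OF ab]) (use prov_finite[OF a] in auto)
qed

lemma prov_trans: "prov {a} {b} \<Longrightarrow> prov {b} {c} \<Longrightarrow> prov {a} {c}"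
  using prov_cutR[of b c "{a}" "{}"] by simp

lemma prov_cut_finite:
  assumes "finite S" and "\<forall>s\<in>S. prov \<Gamma> (insert s \<Delta>)" and "prov (S \<union> \<Gamma>) \<Delta>"
  shows "prov \<Gamma> \<Delta>"
  using assms
proof (induction S rule: finite_induct)
  case (insert s S)
  have s: "prov \<Gamma> (insert s \<Delta>)"
    using insert.prems(1) by simp
  have "prov (S \<union> \<Gamma>) (insert s \<Delta>)"
    by (rule Wk[OF s]) (use insert.hyps(1) prov_finite[OF s] in auto)
  moreover have "prov (insert s (S \<union> \<Gamma>)) \<Delta>"
    using insert.prems(2) by simp
  ultimately have "prov (S \<union> \<Gamma>) \<Delta>"
    by (rule Cut)
  with insert.IH insert.prems(1) show ?case
    by simp
qed simp

lemma prov_negL: "prov (insert (neg f) \<Gamma>) \<Delta> \<longleftrightarrow> prov \<Gamma> (insert f \<Delta>)"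
proof
  assume neg: "prov (insert (neg f) \<Gamma>) \<Delta>"
  have "finite \<Gamma>" "finite \<Delta>"
    using prov_finite[OF neg] by auto
  then have "prov \<Gamma> (insert (neg f) (insert f \<Delta>))"
    by (intro ImpR prov_mem) auto
  moreover have "prov (insert (neg f) \<Gamma>) (insert f \<Delta>)"
    using neg by (rule prov_insertR)
  ultimately show "prov \<Gamma> (insert f \<Delta>)"
    by (rule Cut)
next
  assume "prov \<Gamma> (insert f \<Delta>)"
  then show "prov (insert (neg f) \<Gamma>) \<Delta>"
  proof (rule ImpL)
    show "prov (insert Bot \<Gamma>) \<Delta>"
      using prov_finite[OF \<open>prov \<Gamma> (insert f \<Delta>)\<close>] by (intro BotL) auto
  qed
qed

lemma prov_negR: "prov \<Gamma> (insert (neg f) \<Delta>) \<longleftrightarrow> prov (insert f \<Gamma>) \<Delta>"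
proof
  assume neg: "prov \<Gamma> (insert (neg f) \<Delta>)"
  have "finite \<Gamma>" "finite \<Delta>"
    using prov_finite[OF neg] by auto
  then have "prov (insert (neg f) (insert f \<Gamma>)) \<Delta>"
    unfolding prov_negL by (intro prov_mem) auto
  with prov_insertL[OF neg] show "prov (insert f \<Gamma>) \<Delta>"
    by (rule Cut)
next
  assume "prov (insert f \<Gamma>) \<Delta>"
  then show "prov \<Gamma> (insert (neg f) \<Delta>)"
    by (intro ImpR prov_insertR)
qed

lemma prov_negsL: "finite N \<Longrightarrow> prov (neg ` N \<union> \<Gamma>) \<Delta> \<longleftrightarrow> prov \<Gamma> (N \<union> \<Delta>)"
  by (induction N arbitrary: \<Delta> rule: finite_induct) (simp_all add: prov_negL)

lemma prov_contrapos: "prov {a} {b} \<Longrightarrow> prov {neg b} {neg a}"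
proof -
  assume "prov {a} {b}"
  then have "prov (insert (neg b) {a}) {}"
    by (simp add: prov_negL)
  then show ?thesis
    by (simp add: prov_negR insert_commute)
qed

fun Conj :: "('p, 'a) fm list \<Rightarrow> ('p, 'a) fm" where
  "Conj [] = neg Bot"
| "Conj (f # fs) = neg (Imp f (neg (Conj fs)))"

lemma prov_ConjR:
  assumes "finite \<Gamma>" and "finite \<Delta>" and "\<forall>f\<in>set fs. prov \<Gamma> (insert f \<Delta>)"
  shows "prov \<Gamma> (insert (Conj fs) \<Delta>)"
  using assms(3)
proof (induction fs)
  case Nil
  show ?case
    using assms(1,2) by (simp add: prov_negR BotL)
next
  case (Cons f fs)
  then show ?case
    by (simp add: prov_negR prov_negL ImpL)
qed

lemma prov_ConjL: "prov (insert (Conj fs) \<Gamma>) \<Delta> \<longleftrightarrow> prov (set fs \<union> \<Gamma>) \<Delta>"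
proof
  assume conj: "prov (insert (Conj fs) \<Gamma>) \<Delta>"
  have fin: "finite (set fs \<union> \<Gamma>)" "finite \<Delta>"
    using prov_finite[OF conj] by auto
  then have "prov (set fs \<union> \<Gamma>) (insert (Conj fs) \<Delta>)"
    by (intro prov_ConjR) (auto intro: prov_mem)
  moreover have "prov (insert (Conj fs) (set fs \<union> \<Gamma>)) \<Delta>"
    by (rule Wk[OF conj]) (use fin in auto)
  ultimately show "prov (set fs \<union> \<Gamma>) \<Delta>"
    by (rule Cut)
next
  show "prov (set fs \<union> \<Gamma>) \<Delta> \<Longrightarrow> prov (insert (Conj fs) \<Gamma>) \<Delta>"
  proof (induction fs arbitrary: \<Gamma>)
    case Nil
    then show ?case
      by (simp add: prov_insertL)
  next
    case (Cons f fs)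
    then have "prov (insert (Conj fs) (insert f \<Gamma>)) \<Delta>"
      by simp
    then show ?case
      by (simp add: prov_negL prov_negR ImpR insert_commute)
  qed
qed

lemma prov_normal_modality:
  assumes normal: "\<And>T f. prov T {f} \<Longrightarrow> prov (box ` T) {box f}"
    and "finite T" and "\<forall>x\<in>T. prov {a} {box x}" and "prov T {f}"
  shows "prov {a} {box f}"
proof (rule prov_cut_finite)
  show "finite (box ` T)"
    using \<open>finite T\<close> by simp
  show "\<forall>s\<in>box ` T. prov {a} (insert s {box f})"
  proof
    fix s assume "s \<in> box ` T"
    then have "prov {a} {s}"
      using assms(3) by blast
    then show "prov {a} (insert s {box f})"
      using prov_insertR[of "{a}" "{s}" "box f"] by (simp add: insert_commute)
  qed
  show "prov (box ` T \<union> {a}) {box f}"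
    by (rule Wk[OF normal[OF assms(4)]]) (use \<open>finite T\<close> in auto)
qed

lemma prov_Box_mono: "prov T {f} \<Longrightarrow> prov (Box p ` T) {Box p f}"
  using BoxR[of T f p "{}"] by (simp add: boxes_def boxesC_def)

lemma prov_Box_mono1: "prov {a} {f} \<Longrightarrow> prov {Box p a} {Box p f}"
  using prov_Box_mono[of "{a}" f p] by simp

lemma prov_BoxC_mono: "prov T {f} \<Longrightarrow> prov (BoxC p ` T) {BoxC p f}"
  using BoxCR[of T f p "{}"] by (simp add: boxes_def boxesC_def)

section \<open>Converse boxes\<close>

lemma prov_tense: "prov {} {f, Box p (neg (BoxC p f))}"
proof -
  have "prov {} (insert (neg (BoxC p f)) (boxesC p {f}))"
    by (simp add: prov_negR boxesC_def prov_mem)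
  from BoxR[OF this] show ?thesis
    by (simp add: boxes_def insert_commute)
qed

lemma prov_BoxC_adjoint: "prov {} {f, Box p g} \<Longrightarrow> prov {} {BoxC p f, g}"
  using BoxCR[of "{}" f p "{g}"] by (simp add: boxes_def boxesC_def)

lemma prov_BoxC_adjoint_chain: "prov {} {f, foldr Box ps g} \<Longrightarrow> prov {} {fold BoxC ps f, g}"
  by (induction ps arbitrary: f) (simp_all add: prov_BoxC_adjoint)

lemma prov_BoxC_neg_swap: "prov {a} {Box p (neg b)} \<Longrightarrow> prov {b} {BoxC p (neg a)}"
  using prov_BoxC_adjoint[of "neg a" p "neg b"] by (simp add: prov_negR insert_commute)

(*
  The tense axiom f -> [p]<p>^- f and the adjunction between [q] and [q]^- turn every
  unfolding rule for [p] into one for [p]^-.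
*)
lemma prov_BoxC_of_Box:
  assumes "\<And>\<chi>. prov {Box p \<chi>} {foldr Box ps \<chi>}"
  shows "prov {BoxC p f} {fold BoxC ps f}"
proof -
  have "prov {} (insert (Box p (neg (BoxC p f))) {f})"
    using prov_tense by (simp add: insert_commute)
  then have "prov {} (insert (foldr Box ps (neg (BoxC p f))) {f})"
    by (rule prov_cutR[OF assms])
  then have "prov {} {fold BoxC ps f, neg (BoxC p f)}"
    by (intro prov_BoxC_adjoint_chain) (simp add: insert_commute)
  then show ?thesis
    using prov_negR[of "{}" "BoxC p f" "{fold BoxC ps f}"] by (simp add: insert_commute)
qed

lemma prov_Box_SeqD: "prov {Box (Seq p q) f} {Box p (Box q f)}"
  by (rule SeqL[of p q f "{}", simplified], rule prov_mem) auto

lemma prov_Box_ChD1: "prov {Box (Ch p q) f} {Box p f}"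
  by (rule ChL[of p f q "{}", simplified], rule prov_mem) auto

lemma prov_Box_ChD2: "prov {Box (Ch p q) f} {Box q f}"
  by (rule ChL[of p f q "{}", simplified], rule prov_mem) auto

lemma prov_Box_StarD_refl: "prov {Box (Star p) f} {f}"
  by (rule StarL[of f p "{}", simplified], rule prov_mem) auto

lemma prov_Box_StarD_step: "prov {Box (Star p) f} {Box p (Box (Star p) f)}"
  by (rule StarL[of f p "{}", simplified], rule prov_mem) auto

lemma prov_Box_Star_shift: "prov {Box (Star p) f} {Box (Star p) (Box p f)}"
proof -
  have "prov (insert (Box (Star p) f) (boxes (Star p) {})) {Box (Star p) (Box (Star p) f)}"
    by (rule StarR) (simp add: prov_Box_StarD_step)
  then have star: "prov {Box (Star p) f} {Box (Star p) (Box (Star p) f)}"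
    by (simp add: boxes_def)
  have step: "prov {Box (Star p) f} {Box p f}"
    by (rule prov_trans[OF prov_Box_StarD_step prov_Box_mono1[OF prov_Box_StarD_refl]])
  show ?thesis
    by (rule prov_trans[OF star prov_Box_mono1[OF step]])
qed

lemma prov_Box_TestD: "prov {Box (Test g) f, g} {f}"
  by (rule TestL[of "{g}" g "{f}" f]; rule prov_mem) auto

lemma prov_BoxC_SeqD: "prov {BoxC (Seq p q) f} {BoxC q (BoxC p f)}"
  by (rule prov_BoxC_of_Box[of _ "[p, q]", simplified]) (rule prov_Box_SeqD)

lemma prov_BoxC_ChD1: "prov {BoxC (Ch p q) f} {BoxC p f}"
  by (rule prov_BoxC_of_Box[of _ "[p]", simplified]) (rule prov_Box_ChD1)

lemma prov_BoxC_ChD2: "prov {BoxC (Ch p q) f} {BoxC q f}"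
  by (rule prov_BoxC_of_Box[of _ "[q]", simplified]) (rule prov_Box_ChD2)

lemma prov_BoxC_StarD_refl: "prov {BoxC (Star p) f} {f}"
  by (rule prov_BoxC_of_Box[of _ "[]", simplified]) (rule prov_Box_StarD_refl)

lemma prov_BoxC_StarD_step: "prov {BoxC (Star p) f} {BoxC p (BoxC (Star p) f)}"
  by (rule prov_BoxC_of_Box[of _ "[Star p, p]", simplified]) (rule prov_Box_Star_shift)

lemma prov_BoxC_TestD: "prov {BoxC (Test g) f, g} {f}"
proof -
  let ?N = "neg (BoxC (Test g) f)"
  have "prov {g} {Box (Test g) ?N, f, ?N}"
    using prov_tense[of f "Test g"] by (rule Wk) auto
  moreover have "prov (insert (Box (Test g) ?N) {g}) {f, ?N}"
    using prov_Box_TestD[of g ?N] by (rule Wk) auto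
  ultimately have "prov {g} {?N, f}"
    using Cut[of "{g}" "Box (Test g) ?N" "{f, ?N}"] by (simp add: insert_commute)
  then show ?thesis
    using prov_negR[of "{g}" "BoxC (Test g) f" "{f}"] by (simp add: insert_commute)
qed

lemma prov_Box_neg_of_BoxC: "prov {b} {BoxC p f} \<Longrightarrow> prov {neg f} {Box p (neg b)}"
proof -
  assume "prov {b} {BoxC p f}"
  then have "prov {Box p (neg (BoxC p f))} {Box p (neg b)}"
    by (intro prov_Box_mono1 prov_contrapos)
  moreover have "prov {} (insert (Box p (neg (BoxC p f))) {f})"
    using prov_tense[of f p] by (simp add: insert_commute)
  ultimately have "prov {} (insert (Box p (neg b)) {f})"
    by (rule prov_cutR)
  then show ?thesis
    by (simp add: prov_negL insert_commute)
qed

section \<open>Fischer-Ladner closure\<close>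

fun fl_succ :: "('p, 'a) fm \<Rightarrow> ('p, 'a) fm set" where
  "fl_succ Bot = {}"
| "fl_succ (Atom p) = {}"
| "fl_succ (Imp f g) = {f, g}"
| "fl_succ (Box (At a) f) = {f}"
| "fl_succ (Box (Seq p q) f) = {Box p (Box q f), Box q f, f}"
| "fl_succ (Box (Ch p q) f) = {Box p f, Box q f, f}"
| "fl_succ (Box (Star p) f) = {f, Box p (Box (Star p) f)}"
| "fl_succ (Box (Test g) f) = {g, f}"
| "fl_succ (BoxC (At a) f) = {f}"
| "fl_succ (BoxC (Seq p q) f) = {BoxC q (BoxC p f), BoxC p f, f}"
| "fl_succ (BoxC (Ch p q) f) = {BoxC p f, BoxC q f, f}"
| "fl_succ (BoxC (Star p) f) = {f, BoxC p (BoxC (Star p) f)}"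
| "fl_succ (BoxC (Test g) f) = {g, f}"

fun FL :: "('p, 'a) fm \<Rightarrow> ('p, 'a) fm set"
  and FL_Box :: "('p, 'a) pg \<Rightarrow> ('p, 'a) fm \<Rightarrow> ('p, 'a) fm set"
  and FL_BoxC :: "('p, 'a) pg \<Rightarrow> ('p, 'a) fm \<Rightarrow> ('p, 'a) fm set" where
  "FL Bot = {Bot}"
| "FL (Atom p) = {Atom p}"
| "FL (Imp f g) = insert (Imp f g) (FL f \<union> FL g)"
| "FL (Box p f) = FL_Box p f \<union> FL f"
| "FL (BoxC p f) = FL_BoxC p f \<union> FL f"
| "FL_Box (At a) f = {Box (At a) f}"
| "FL_Box (Seq p q) f = insert (Box (Seq p q) f) (FL_Box p (Box q f) \<union> FL_Box q f)"
| "FL_Box (Ch p q) f = insert (Box (Ch p q) f) (FL_Box p f \<union> FL_Box q f)"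
| "FL_Box (Star p) f = insert (Box (Star p) f) (FL_Box p (Box (Star p) f))"
| "FL_Box (Test g) f = insert (Box (Test g) f) (FL g)"
| "FL_BoxC (At a) f = {BoxC (At a) f}"
| "FL_BoxC (Seq p q) f = insert (BoxC (Seq p q) f) (FL_BoxC q (BoxC p f) \<union> FL_BoxC p f)"
| "FL_BoxC (Ch p q) f = insert (BoxC (Ch p q) f) (FL_BoxC p f \<union> FL_BoxC q f)"
| "FL_BoxC (Star p) f = insert (BoxC (Star p) f) (FL_BoxC p (BoxC (Star p) f))"
| "FL_BoxC (Test g) f = insert (BoxC (Test g) f) (FL g)"

lemma fl_succ_Box_body: "f \<in> fl_succ (Box \<pi> f)"
  by (cases \<pi>) auto

lemma fl_succ_BoxC_body: "f \<in> fl_succ (BoxC \<pi> f)"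
  by (cases \<pi>) auto

lemma finite_FL: "finite (FL f)" "finite (FL_Box p f)" "finite (FL_BoxC p f)"
  by (induction f and p f and p f rule: FL_FL_Box_FL_BoxC.induct) auto

lemma FL_Box_self [simp]: "Box p f \<in> FL_Box p f"
  by (cases p) auto

lemma FL_BoxC_self [simp]: "BoxC p f \<in> FL_BoxC p f"
  by (cases p) auto

lemma FL_self [simp]: "f \<in> FL f"
  by (cases f) auto

lemma FL_succ_closed:
  "X \<in> FL f \<Longrightarrow> fl_succ X \<subseteq> FL f"
  "X \<in> FL_Box p f \<Longrightarrow> fl_succ X \<subseteq> FL_Box p f \<union> FL f"
  "X \<in> FL_BoxC p f \<Longrightarrow> fl_succ X \<subseteq> FL_BoxC p f \<union> FL f"
  by (induction f and p f and p f arbitrary: X and X and X rule: FL_FL_Box_FL_BoxC.induct)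
    auto

section \<open>Atoms\<close>

lemma lindenbaum:
  assumes "finite S" and "\<not> prov \<Gamma> \<Delta>" and "finite \<Gamma>" and "finite \<Delta>"
  shows "\<exists>A\<subseteq>S. \<not> prov (\<Gamma> \<union> A) (\<Delta> \<union> (S - A))"
  using assms(1)
proof (induction S rule: finite_induct)
  case empty
  then show ?case
    using assms(2) by simp
next
  case (insert c S)
  then obtain A where A: "A \<subseteq> S" "\<not> prov (\<Gamma> \<union> A) (\<Delta> \<union> (S - A))"
    by auto
  have fin: "finite (\<Gamma> \<union> A)" "finite (\<Delta> \<union> (S - A))"
    using A(1) insert.hyps(1) assms(3,4) finite_subset by auto
  show ?case
  proof (cases "prov (insert c (\<Gamma> \<union> A)) (\<Delta> \<union> (S - A))")
    case True
    then have "\<not> prov (\<Gamma> \<union> A) (insert c (\<Delta> \<union> (S - A)))"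
      using A(2) Cut by blast
    moreover have "insert c S - A = insert c (S - A)"
      using A(1) insert.hyps(2) by auto
    ultimately show ?thesis
      using A(1) by (intro exI[of _ A]) auto
  next
    case False
    moreover have "insert c S - insert c A = S - A"
      using A(1) insert.hyps(2) by auto
    ultimately show ?thesis
      using A(1) by (intro exI[of _ "insert c A"]) auto
  qed
qed

locale fl_closed =
  fixes cs :: "('p, 'a) fm list"
  assumes fl_succ_closed: "X \<in> set cs \<Longrightarrow> fl_succ X \<subseteq> set cs"
begin

abbreviation C :: "('p, 'a) fm set" where
  "C \<equiv> set cs"

definition atom :: "('p, 'a) fm set \<Rightarrow> bool" where
  "atom A \<longleftrightarrow> A \<subseteq> C \<and> \<not> prov A (C - A)"

definition char_fm :: "('p, 'a) fm set \<Rightarrow> ('p, 'a) fm" where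
  "char_fm A = Conj (map (\<lambda>f. if f \<in> A then f else neg f) cs)"

lemma atom_subset: "atom A \<Longrightarrow> A \<subseteq> C"
  by (simp add: atom_def)

lemma atom_finite: "atom A \<Longrightarrow> finite A"
  using atom_subset finite_subset by blast

lemma finite_atoms: "finite {A. atom A}"
  by (rule finite_subset[of _ "Pow C"]) (auto simp: atom_def)

lemma atom_fl_succ: "atom A \<Longrightarrow> f \<in> A \<Longrightarrow> g \<in> fl_succ f \<Longrightarrow> g \<in> C"
  using atom_subset fl_succ_closed by blast

lemma atom_unprovable: "atom A \<Longrightarrow> \<Gamma> \<subseteq> A \<Longrightarrow> \<Delta> \<subseteq> C - A \<Longrightarrow> \<not> prov \<Gamma> \<Delta>"
  using Wk[of \<Gamma> \<Delta> A "C - A"] atom_finite by (auto simp: atom_def)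

lemma atom_prov_mem: "atom A \<Longrightarrow> \<Gamma> \<subseteq> A \<Longrightarrow> g \<in> C \<Longrightarrow> prov \<Gamma> {g} \<Longrightarrow> g \<in> A"
  using atom_unprovable[of A \<Gamma> "{g}"] by auto

lemma atom_prov_succ: "atom A \<Longrightarrow> f \<in> A \<Longrightarrow> g \<in> fl_succ f \<Longrightarrow> prov {f} {g} \<Longrightarrow> g \<in> A"
  using atom_prov_mem[of A "{f}" g] atom_fl_succ by blast

lemma prov_char_fmL:
  assumes "A \<subseteq> C"
  shows "prov (insert (char_fm A) \<Gamma>) \<Delta> \<longleftrightarrow> prov (A \<union> \<Gamma>) ((C - A) \<union> \<Delta>)"
proof -
  have "set (map (\<lambda>f. if f \<in> A then f else neg f) cs) = neg ` (C - A) \<union> A"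
    using assms by auto
  then have "prov (insert (char_fm A) \<Gamma>) \<Delta> \<longleftrightarrow> prov (neg ` (C - A) \<union> (A \<union> \<Gamma>)) \<Delta>"
    by (simp add: char_fm_def prov_ConjL Un_assoc)
  also have "\<dots> \<longleftrightarrow> prov (A \<union> \<Gamma>) ((C - A) \<union> \<Delta>)"
    by (simp add: prov_negsL)
  finally show ?thesis .
qed

lemma prov_char_fmR:
  assumes "A \<subseteq> C" and "finite \<Gamma>" and "finite \<Delta>"
  shows "prov (A \<union> \<Gamma>) (insert (char_fm A) ((C - A) \<union> \<Delta>))"
  unfolding char_fm_def
proof (rule prov_ConjR)
  have "finite A"
    using assms(1) finite_subset by blast
  then show fin: "finite (A \<union> \<Gamma>)" "finite ((C - A) \<union> \<Delta>)"
    using assms(2,3) by auto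
  show "\<forall>f\<in>set (map (\<lambda>f. if f \<in> A then f else neg f) cs). prov (A \<union> \<Gamma>) (insert f ((C - A) \<union> \<Delta>))"
  proof
    fix f assume "f \<in> set (map (\<lambda>f. if f \<in> A then f else neg f) cs)"
    then obtain g where "g \<in> C" and "f = (if g \<in> A then g else neg g)"
      by auto
    then show "prov (A \<union> \<Gamma>) (insert f ((C - A) \<union> \<Delta>))"
      using fin by (cases "g \<in> A") (auto simp: prov_negR intro!: prov_mem[where f = g])
  qed
qed

lemma prov_char_fm_mem: "atom A \<Longrightarrow> f \<in> A \<Longrightarrow> prov {char_fm A} {f}"
  using prov_char_fmL[of A "{}" "{f}"] atom_finite by (auto simp: atom_def intro: prov_mem)

lemma prov_char_fm_nmem: "atom A \<Longrightarrow> f \<in> C \<Longrightarrow> f \<notin> A \<Longrightarrow> prov {char_fm A, f} {}"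
  using prov_char_fmL[of A "{f}" "{}"] atom_finite by (auto simp: atom_def intro: prov_mem)

lemma prov_char_fm_neg: "atom A \<Longrightarrow> f \<in> C \<Longrightarrow> f \<notin> A \<Longrightarrow> prov {char_fm A} {neg f}"
  using prov_char_fm_nmem by (simp add: prov_negR insert_commute)

lemma prov_char_fm_iff:
  assumes "atom A" and "g \<in> C"
  shows "prov {char_fm A} {g} \<longleftrightarrow> g \<in> A"
proof
  assume "prov {char_fm A} {g}"
  then have "prov A ((C - A) \<union> {g})"
    using prov_char_fmL[of A "{}" "{g}"] assms(1) by (simp add: atom_subset)
  show "g \<in> A"
  proof (rule ccontr)
    assume "g \<notin> A"
    then have "(C - A) \<union> {g} = C - A"
      using assms(2) by auto
    with \<open>prov A ((C - A) \<union> {g})\<close> assms(1) show False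
      by (simp add: atom_def)
  qed
qed (rule prov_char_fm_mem[OF assms(1)])

lemma prov_char_fm_distinct:
  assumes "atom A" and "atom B" and "A \<noteq> B"
  shows "prov {char_fm A, char_fm B} {}"
proof -
  obtain f where "f \<in> A \<inter> (C - B) \<or> f \<in> B \<inter> (C - A)"
    using assms by (auto simp: atom_def)
  then have "prov (A \<union> B) ((C - A) \<union> (C - B))"
    using assms(1,2) by (intro prov_mem) (auto simp: atom_finite)
  then show ?thesis
    using assms(1,2) by (simp add: prov_char_fmL atom_subset Un_commute insert_commute)
qed

lemma atom_extend:
  assumes "finite \<Gamma>" and "finite \<Delta>" and "\<not> prov \<Gamma> \<Delta>"
  obtains A where "atom A" and "\<not> prov (\<Gamma> \<union> A) (\<Delta> \<union> (C - A))"
proof -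
  obtain A where A: "A \<subseteq> C" "\<not> prov (\<Gamma> \<union> A) (\<Delta> \<union> (C - A))"
    using lindenbaum[OF _ assms(3,1,2)] by blast
  have "finite A"
    using A(1) finite_subset by blast
  then have "atom A"
    using A assms(1,2) Wk[of A "C - A" "\<Gamma> \<union> A" "\<Delta> \<union> (C - A)"] by (auto simp: atom_def)
  then show ?thesis
    using A(2) by (rule that)
qed

lemma prov_by_atom_cases:
  assumes bad: "Bad \<subseteq> {A. atom A}"
    and good: "\<And>B. atom B \<Longrightarrow> B \<notin> Bad \<Longrightarrow> prov {char_fm B} {\<psi>}"
  shows "prov ((\<lambda>B. neg (char_fm B)) ` Bad) {\<psi>}"
proof (rule ccontr)
  let ?N = "(\<lambda>B. neg (char_fm B)) ` Bad"
  have fin: "finite ?N"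
    using bad finite_atoms finite_subset by blast
  assume "\<not> prov ?N {\<psi>}"
  then obtain A where A: "atom A" "\<not> prov (?N \<union> A) ({\<psi>} \<union> (C - A))"
    using atom_extend[OF fin] by blast
  show False
  proof (cases "A \<in> Bad")
    case True
    have "prov (A \<union> ?N) (insert (char_fm A) ((C - A) \<union> {\<psi>}))"
      using A(1) fin by (intro prov_char_fmR) (auto simp: atom_subset)
    then have "prov (insert (neg (char_fm A)) (A \<union> ?N)) ((C - A) \<union> {\<psi>})"
      by (simp add: prov_negL)
    with True A(2) show False
      by (simp add: insert_absorb Un_commute)
  next
    case False
    then have "prov (A \<union> {}) ((C - A) \<union> {\<psi>})"
      using good A(1) prov_char_fmL[of A "{}" "{\<psi>}"] by (simp add: atom_subset)
    then have "prov (?N \<union> A) ({\<psi>} \<union> (C - A))"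
      by (rule Wk) (auto simp: fin atom_finite A(1))
    with A(2) show False
      by simp
  qed
qed

section \<open>The canonical model\<close>

definition canonical :: "(('p, 'a) fm set, 'p, 'a) model" where
  "canonical =
    \<lparr>W = {A. atom A},
     R = (\<lambda>a. {(A, B). atom A \<and> atom B \<and>
                (\<forall>f. Box (At a) f \<in> A \<longrightarrow> f \<in> B) \<and> (\<forall>f. BoxC (At a) f \<in> B \<longrightarrow> f \<in> A)}),
     V = (\<lambda>A. {p. Atom p \<in> A})\<rparr>"

lemma canonical_simps [simp]:
  "W canonical = {A. atom A}"
  "R canonical a = {(A, B). atom A \<and> atom B \<and>
     (\<forall>f. Box (At a) f \<in> A \<longrightarrow> f \<in> B) \<and> (\<forall>f. BoxC (At a) f \<in> B \<longrightarrow> f \<in> A)}"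
  "V canonical A = {p. Atom p \<in> A}"
  by (simp_all add: canonical_def)

lemma rel_canonical_subset: "rel canonical \<pi> \<subseteq> {A. atom A} \<times> {A. atom A}"
proof (induction \<pi>)
  case (Star \<pi>)
  then show ?case
    using trancl_subset_Sigma[OF Star] by (auto simp: Id_on_def)
qed auto

lemma rel_canonical_atoms: "(A, B) \<in> rel canonical \<pi> \<Longrightarrow> atom A \<and> atom B"
  using rel_canonical_subset by blast

lemma rel_canonical_Star:
  "(A, B) \<in> rel canonical (Star p) \<longleftrightarrow> atom A \<and> (A, B) \<in> (rel canonical p)\<^sup>*"
  using trancl_subset_Sigma[OF rel_canonical_subset[of p]]
  by (auto simp: rtrancl_eq_or_trancl Id_on_def)

definition dia_consistent :: "('p, 'a) pg \<Rightarrow> ('p, 'a) fm set \<Rightarrow> ('p, 'a) fm set \<Rightarrow> bool" where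
  "dia_consistent \<pi> A B \<longleftrightarrow> \<not> prov {char_fm A} {Box \<pi> (neg (char_fm B))}"

section \<open>Truth lemma\<close>

definition rel_complete :: "('p, 'a) pg \<Rightarrow> bool" where
  "rel_complete \<pi> \<longleftrightarrow>
     (\<forall>A B. atom A \<longrightarrow> atom B \<longrightarrow> dia_consistent \<pi> A B \<longrightarrow> (A, B) \<in> rel canonical \<pi>)"

definition Box_sound :: "('p, 'a) pg \<Rightarrow> bool" where
  "Box_sound \<pi> \<longleftrightarrow> (\<forall>A B f. (A, B) \<in> rel canonical \<pi> \<longrightarrow> Box \<pi> f \<in> A \<longrightarrow> f \<in> B)"

definition BoxC_sound :: "('p, 'a) pg \<Rightarrow> bool" where
  "BoxC_sound \<pi> \<longleftrightarrow> (\<forall>A B f. (A, B) \<in> rel canonical \<pi> \<longrightarrow> BoxC \<pi> f \<in> B \<longrightarrow> f \<in> A)"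

definition truthful :: "('p, 'a) fm \<Rightarrow> bool" where
  "truthful f \<longleftrightarrow> (\<forall>A. atom A \<longrightarrow> (sat canonical A f \<longleftrightarrow> f \<in> A))"

lemma rel_complete_At: "rel_complete (At a)"
  unfolding rel_complete_def
proof (intro allI impI)
  fix A B
  assume A: "atom A" and B: "atom B" and cons: "dia_consistent (At a) A B"
  have "f \<in> B" if "Box (At a) f \<in> A" for f
  proof (rule ccontr)
    assume "f \<notin> B"
    moreover have "f \<in> C"
      using atom_fl_succ[OF A that] by simp
    ultimately have "prov {f} {neg (char_fm B)}"
      using prov_char_fm_nmem[OF B] by (simp add: prov_negR)
    then have "prov {char_fm A} {Box (At a) (neg (char_fm B))}"
      by (rule prov_trans[OF prov_char_fm_mem[OF A that] prov_Box_mono1])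
    with cons show False
      by (simp add: dia_consistent_def)
  qed
  moreover have "f \<in> A" if "BoxC (At a) f \<in> B" for f
  proof (rule ccontr)
    have "f \<in> C"
      using atom_fl_succ[OF B that] by simp
    moreover assume "f \<notin> A"
    ultimately have "prov {char_fm A} {neg f}"
      by (rule prov_char_fm_neg[OF A])
    then have "prov {char_fm A} {Box (At a) (neg (char_fm B))}"
      by (rule prov_trans[OF _ prov_Box_neg_of_BoxC[OF prov_char_fm_mem[OF B that]]])
    with cons show False
      by (simp add: dia_consistent_def)
  qed
  ultimately show "(A, B) \<in> rel canonical (At a)"
    using A B by simp
qed

lemma Box_sound_At: "Box_sound (At a)"
  by (simp add: Box_sound_def)

lemma BoxC_sound_At: "BoxC_sound (At a)"
  by (simp add: BoxC_sound_def)

lemma dia_consistent_SeqE: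
  assumes "dia_consistent (Seq p q) A B"
  obtains D where "atom D" and "dia_consistent p A D" and "dia_consistent q D B"
proof (rule ccontr)
  assume none: "\<not> thesis"
  let ?Bad = "{D. atom D \<and> \<not> dia_consistent p A D}"
  have "prov ((\<lambda>D. neg (char_fm D)) ` ?Bad) {Box q (neg (char_fm B))}"
    using none that by (intro prov_by_atom_cases) (auto simp: dia_consistent_def)
  then have "prov {char_fm A} {Box p (Box q (neg (char_fm B)))}"
    by (intro prov_normal_modality[where box = "Box p", OF prov_Box_mono])
      (auto simp: dia_consistent_def intro: finite_subset[OF _ finite_atoms])
  then have "prov {char_fm A} {Box (Seq p q) (neg (char_fm B))}"
    using SeqR[of "{char_fm A}" p q _ "{}"] by simp
  with assms show False
    by (simp add: dia_consistent_def)
qed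

lemma rel_complete_Seq: "rel_complete p \<Longrightarrow> rel_complete q \<Longrightarrow> rel_complete (Seq p q)"
  unfolding rel_complete_def rel.simps by (meson dia_consistent_SeqE relcompI)

lemma Box_sound_Seq:
  assumes "Box_sound p" and "Box_sound q"
  shows "Box_sound (Seq p q)"
  unfolding Box_sound_def
proof (intro allI impI)
  fix A B f
  assume "(A, B) \<in> rel canonical (Seq p q)" and f: "Box (Seq p q) f \<in> A"
  then obtain D where AD: "(A, D) \<in> rel canonical p" and DB: "(D, B) \<in> rel canonical q"
    by auto
  have "Box p (Box q f) \<in> A"
    using atom_prov_succ[OF _ f _ prov_Box_SeqD] rel_canonical_atoms[OF AD] by simp
  then show "f \<in> B"
    using assms AD DB unfolding Box_sound_def by blast
qed

lemma BoxC_sound_Seq: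
  assumes "BoxC_sound p" and "BoxC_sound q"
  shows "BoxC_sound (Seq p q)"
  unfolding BoxC_sound_def
proof (intro allI impI)
  fix A B f
  assume "(A, B) \<in> rel canonical (Seq p q)" and f: "BoxC (Seq p q) f \<in> B"
  then obtain D where AD: "(A, D) \<in> rel canonical p" and DB: "(D, B) \<in> rel canonical q"
    by auto
  have "BoxC q (BoxC p f) \<in> B"
    using atom_prov_succ[OF _ f _ prov_BoxC_SeqD] rel_canonical_atoms[OF DB] by simp
  then show "f \<in> A"
    using assms AD DB unfolding BoxC_sound_def by blast
qed

lemma dia_consistent_ChD:
  "dia_consistent (Ch p q) A B \<Longrightarrow> dia_consistent p A B \<or> dia_consistent q A B"
  using ChR[of "{char_fm A}" p _ "{}" q] by (auto simp: dia_consistent_def)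

lemma rel_complete_Ch: "rel_complete p \<Longrightarrow> rel_complete q \<Longrightarrow> rel_complete (Ch p q)"
  unfolding rel_complete_def by (auto dest: dia_consistent_ChD)

lemma Box_sound_Ch:
  assumes "Box_sound p" and "Box_sound q"
  shows "Box_sound (Ch p q)"
  unfolding Box_sound_def
proof (intro allI impI)
  fix A B f
  assume AB: "(A, B) \<in> rel canonical (Ch p q)" and f: "Box (Ch p q) f \<in> A"
  have A: "atom A"
    using rel_canonical_atoms[OF AB] by simp
  have "Box p f \<in> A" and "Box q f \<in> A"
    using atom_prov_succ[OF A f _ prov_Box_ChD1] atom_prov_succ[OF A f _ prov_Box_ChD2]
    by simp_all
  with AB show "f \<in> B"
    using assms unfolding Box_sound_def by auto
qed

lemma BoxC_sound_Ch:
  assumes "BoxC_sound p" and "BoxC_sound q"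
  shows "BoxC_sound (Ch p q)"
  unfolding BoxC_sound_def
proof (intro allI impI)
  fix A B f
  assume AB: "(A, B) \<in> rel canonical (Ch p q)" and f: "BoxC (Ch p q) f \<in> B"
  have B: "atom B"
    using rel_canonical_atoms[OF AB] by simp
  have "BoxC p f \<in> B" and "BoxC q f \<in> B"
    using atom_prov_succ[OF B f _ prov_BoxC_ChD1] atom_prov_succ[OF B f _ prov_BoxC_ChD2]
    by simp_all
  with AB show "f \<in> A"
    using assms unfolding BoxC_sound_def by auto
qed

lemma dia_consistent_TestD:
  assumes "atom A" and "atom B" and "g \<in> C" and cons: "dia_consistent (Test g) A B"
  shows "A = B \<and> g \<in> A"
proof (rule ccontr)
  assume "\<not> (A = B \<and> g \<in> A)"
  then consider "g \<notin> A" | "A \<noteq> B"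
    by blast
  then have "prov {char_fm A, g, char_fm B} {}"
  proof cases
    case 1
    show ?thesis
      by (rule Wk[OF prov_char_fm_nmem[OF assms(1,3) 1]]) auto
  next
    case 2
    show ?thesis
      by (rule Wk[OF prov_char_fm_distinct[OF assms(1,2) 2]]) auto
  qed
  then have "prov {char_fm A} {Box (Test g) (neg (char_fm B))}"
    using TestR[of g "{char_fm A}" "neg (char_fm B)" "{}"] by (simp add: prov_negR insert_commute)
  with cons show False
    by (simp add: dia_consistent_def)
qed

lemma rel_canonical_Test: "truthful g \<Longrightarrow> (A, B) \<in> rel canonical (Test g) \<longleftrightarrow> atom A \<and> A = B \<and> g \<in> A"
  by (auto simp: truthful_def)

lemma rel_complete_Test: "g \<in> C \<Longrightarrow> truthful g \<Longrightarrow> rel_complete (Test g)"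
  unfolding rel_complete_def using dia_consistent_TestD by (auto simp: truthful_def)

lemma Box_sound_Test:
  assumes "truthful g"
  shows "Box_sound (Test g)"
  unfolding Box_sound_def
proof (intro allI impI)
  fix A B f
  assume "(A, B) \<in> rel canonical (Test g)" and f: "Box (Test g) f \<in> A"
  then have A: "atom A" and "A = B" and "g \<in> A"
    using rel_canonical_Test[OF assms] by auto
  moreover have "f \<in> A"
    by (rule atom_prov_mem[OF A _ _ prov_Box_TestD]) (use f \<open>g \<in> A\<close> atom_fl_succ[OF A f] in auto)
  ultimately show "f \<in> B"
    by simp
qed

lemma BoxC_sound_Test:
  assumes "truthful g"
  shows "BoxC_sound (Test g)"
  unfolding BoxC_sound_def
proof (intro allI impI)
  fix A B f
  assume "(A, B) \<in> rel canonical (Test g)" and f: "BoxC (Test g) f \<in> B"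
  then have B: "atom B" and "A = B" and "g \<in> B"
    using rel_canonical_Test[OF assms] by auto
  moreover have "f \<in> B"
    by (rule atom_prov_mem[OF B _ _ prov_BoxC_TestD]) (use f \<open>g \<in> B\<close> atom_fl_succ[OF B f] in auto)
  ultimately show "f \<in> A"
    by simp
qed

lemma Star_invariant:
  assumes S: "S \<subseteq> {D. atom D}"
    and closed: "\<And>D E. D \<in> S \<Longrightarrow> atom E \<Longrightarrow> E \<notin> S \<Longrightarrow> prov {char_fm D} {Box p (neg (char_fm E))}"
  obtains \<delta> where "\<And>D. D \<in> S \<Longrightarrow> prov {char_fm D} {\<delta>}"
    and "prov {\<delta>} {Box p \<delta>}"
    and "\<And>E. atom E \<Longrightarrow> E \<notin> S \<Longrightarrow> prov {\<delta>} {neg (char_fm E)}"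
proof -
  let ?Out = "{E. atom E} - S"
  have fin: "finite ((\<lambda>E. neg (char_fm E)) ` ?Out)"
    using finite_atoms by simp
  obtain Es where Es: "set Es = (\<lambda>E. neg (char_fm E)) ` ?Out"
    using finite_list[OF fin] by blast
  have out: "prov {Conj Es} {neg (char_fm E)}" if "atom E" "E \<notin> S" for E
  proof -
    have "neg (char_fm E) \<in> set Es"
      using Es that by auto
    then have "prov (set Es) {neg (char_fm E)}"
      by (intro prov_mem) auto
    then show ?thesis
      by (simp add: prov_ConjL)
  qed
  have "prov {char_fm D} {neg (char_fm E)}" if "D \<in> S" "atom E" "E \<notin> S" for D E
    using prov_char_fm_distinct[of D E] S that by (auto simp: prov_negR insert_commute)
  then have inside: "prov {char_fm D} {Conj Es}" if "D \<in> S" for D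
    using that Es by (intro prov_ConjR[of "{char_fm D}" "{}", simplified]) auto
  have "prov (set Es) {Conj Es}"
    by (rule prov_ConjR[of "set Es" "{}", simplified]) (auto intro: prov_mem)
  then have "prov {char_fm D} {Box p (Conj Es)}" if "D \<in> S" for D
    using closed that Es fin
    by (intro prov_normal_modality[where box = "Box p", OF prov_Box_mono]) auto
  then have "prov (set Es) {Box p (Conj Es)}"
    unfolding Es by (intro prov_by_atom_cases) auto
  then have step: "prov {Conj Es} {Box p (Conj Es)}"
    using prov_ConjL[of Es "{}"] by simp
  show thesis
    by (rule that[OF inside step out])
qed

lemma dia_consistent_Star_closed:
  assumes S: "S \<subseteq> {D. atom D}"
    and closed: "\<And>D E. D \<in> S \<Longrightarrow> atom E \<Longrightarrow> dia_consistent p D E \<Longrightarrow> E \<in> S"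
    and "A \<in> S" and "atom B" and cons: "dia_consistent (Star p) A B"
  shows "B \<in> S"
proof (rule ccontr)
  assume "B \<notin> S"
  have "prov {char_fm D} {Box p (neg (char_fm E))}" if "D \<in> S" "atom E" "E \<notin> S" for D E
    using closed that unfolding dia_consistent_def by blast
  then obtain \<delta> where inside: "\<And>D. D \<in> S \<Longrightarrow> prov {char_fm D} {\<delta>}"
    and step: "prov {\<delta>} {Box p \<delta>}"
    and out: "\<And>E. atom E \<Longrightarrow> E \<notin> S \<Longrightarrow> prov {\<delta>} {neg (char_fm E)}"
    using Star_invariant[OF S] by blast
  have "prov {\<delta>} {Box (Star p) \<delta>}"
    using StarR[of \<delta> "{}" p] step by (simp add: boxes_def)
  then have "prov {char_fm A} {Box (Star p) (neg (char_fm B))}"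
    using prov_trans[OF inside[OF \<open>A \<in> S\<close>]] prov_trans
      prov_Box_mono1[OF out[OF \<open>atom B\<close> \<open>B \<notin> S\<close>]] by blast
  with cons show False
    by (simp add: dia_consistent_def)
qed

lemma rel_complete_Star:
  assumes "rel_complete p"
  shows "rel_complete (Star p)"
  unfolding rel_complete_def
proof (intro allI impI)
  fix A B
  assume A: "atom A" and B: "atom B" and cons: "dia_consistent (Star p) A B"
  let ?S = "{D. atom D \<and> (A, D) \<in> (rel canonical p)\<^sup>*}"
  have "B \<in> ?S"
  proof (rule dia_consistent_Star_closed[OF _ _ _ B cons])
    show "E \<in> ?S" if "D \<in> ?S" and "atom E" and "dia_consistent p D E" for D E
      using that assms unfolding rel_complete_def by (auto intro: rtrancl_into_rtrancl)
  qed (use A in auto)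
  with A show "(A, B) \<in> rel canonical (Star p)"
    unfolding rel_canonical_Star by simp
qed

lemma Box_sound_Star:
  assumes "Box_sound p"
  shows "Box_sound (Star p)"
  unfolding Box_sound_def
proof (intro allI impI)
  fix A B f
  assume "(A, B) \<in> rel canonical (Star p)" and f: "Box (Star p) f \<in> A"
  then have A: "atom A" and "(A, B) \<in> (rel canonical p)\<^sup>*"
    unfolding rel_canonical_Star by simp_all
  from \<open>(A, B) \<in> (rel canonical p)\<^sup>*\<close> have "atom B \<and> Box (Star p) f \<in> B"
  proof (induction rule: rtrancl_induct)
    case base
    then show ?case
      using A f by simp
  next
    case (step D E)
    then have "Box p (Box (Star p) f) \<in> D"
      using atom_prov_succ[OF _ _ _ prov_Box_StarD_step] by auto
    then show ?case
      using step.hyps(2) assms rel_canonical_atoms unfolding Box_sound_def by blast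
  qed
  then show "f \<in> B"
    using atom_prov_succ[OF _ _ _ prov_Box_StarD_refl] by auto
qed

lemma BoxC_sound_Star:
  assumes "BoxC_sound p"
  shows "BoxC_sound (Star p)"
  unfolding BoxC_sound_def
proof (intro allI impI)
  fix A B f
  assume AB: "(A, B) \<in> rel canonical (Star p)" and f: "BoxC (Star p) f \<in> B"
  then have "(A, B) \<in> (rel canonical p)\<^sup>*"
    unfolding rel_canonical_Star by simp
  then have "atom A \<and> BoxC (Star p) f \<in> A"
  proof (induction rule: converse_rtrancl_induct)
    case base
    then show ?case
      using f rel_canonical_atoms[OF AB] by simp
  next
    case (step D E)
    then have "BoxC p (BoxC (Star p) f) \<in> E"
      using atom_prov_succ[OF _ _ _ prov_BoxC_StarD_step] by auto
    then show ?case
      using step.hyps(1) assms rel_canonical_atoms unfolding BoxC_sound_def by blast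
  qed
  then show "f \<in> A"
    using atom_prov_succ[OF _ _ _ prov_BoxC_StarD_refl] by auto
qed

lemma truthful_Bot: "truthful Bot"
  unfolding truthful_def
  using atom_unprovable[of _ "{Bot}" "{}"] BotL[of "{}" "{}"] by auto

lemma atom_Imp_iff:
  assumes A: "atom A" and "Imp f g \<in> C"
  shows "Imp f g \<in> A \<longleftrightarrow> (f \<in> A \<longrightarrow> g \<in> A)"
proof -
  have C: "f \<in> C" "g \<in> C"
    using fl_succ_closed[OF assms(2)] by auto
  have mp: "prov {Imp f g, f} {g}"
    using ImpL[of "{f}" f "{g}" g] by (auto intro: prov_mem)
  have weak: "prov {g} {Imp f g}"
    using ImpR[of f "{g}" g "{}"] by (auto intro: prov_mem)
  have excl: "prov {} {f, Imp f g}"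
    using ImpR[of f "{}" g "{f}"] by (auto intro: prov_mem simp: insert_commute)
  show ?thesis
  proof (intro iffI impI)
    assume "Imp f g \<in> A" and "f \<in> A"
    then show "g \<in> A"
      using atom_prov_mem[OF A _ C(2) mp] by simp
  next
    assume imp: "f \<in> A \<longrightarrow> g \<in> A"
    show "Imp f g \<in> A"
    proof (cases "f \<in> A")
      case True
      then show ?thesis
        using imp atom_prov_mem[OF A _ assms(2) weak] by simp
    next
      case False
      then show ?thesis
        using atom_unprovable[OF A, of "{}" "{f, Imp f g}"] excl C(1) assms(2) by auto
    qed
  qed
qed

lemma truthful_Imp: "Imp f g \<in> C \<Longrightarrow> truthful f \<Longrightarrow> truthful g \<Longrightarrow> truthful (Imp f g)"
  unfolding truthful_def using atom_Imp_iff by simp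

lemma Box_witness:
  assumes A: "atom A" and "Box \<pi> f \<in> C" and "Box \<pi> f \<notin> A"
  obtains B where "atom B" and "f \<notin> B" and "dia_consistent \<pi> A B"
proof (rule ccontr)
  assume none: "\<not> thesis"
  let ?Bad = "{B. atom B \<and> f \<notin> B}"
  have "prov ((\<lambda>B. neg (char_fm B)) ` ?Bad) {f}"
    by (rule prov_by_atom_cases) (auto intro: prov_char_fm_mem)
  then have "prov {char_fm A} {Box \<pi> f}"
    using none that finite_atoms
    by (intro prov_normal_modality[where box = "Box \<pi>", OF prov_Box_mono])
      (auto simp: dia_consistent_def)
  with assms show False
    by (simp add: prov_char_fm_iff)
qed

lemma BoxC_witness:
  assumes B: "atom B" and "BoxC \<pi> f \<in> C" and "BoxC \<pi> f \<notin> B"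
  obtains A where "atom A" and "f \<notin> A" and "dia_consistent \<pi> A B"
proof (rule ccontr)
  assume none: "\<not> thesis"
  let ?Bad = "{A. atom A \<and> f \<notin> A}"
  have "prov ((\<lambda>A. neg (char_fm A)) ` ?Bad) {f}"
    by (rule prov_by_atom_cases) (auto intro: prov_char_fm_mem)
  then have "prov {char_fm B} {BoxC \<pi> f}"
    using none that finite_atoms
    by (intro prov_normal_modality[where box = "BoxC \<pi>", OF prov_BoxC_mono])
      (auto simp: dia_consistent_def intro: prov_BoxC_neg_swap)
  with assms show False
    by (simp add: prov_char_fm_iff)
qed

lemma truthful_Box:
  assumes "Box \<pi> f \<in> C" and "rel_complete \<pi>" and "Box_sound \<pi>" and "truthful f"
  shows "truthful (Box \<pi> f)"
  unfolding truthful_def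
proof (intro allI impI)
  fix A
  assume A: "atom A"
  have "sat canonical A (Box \<pi> f) \<longleftrightarrow> (\<forall>B. (A, B) \<in> rel canonical \<pi> \<longrightarrow> f \<in> B)"
    using assms(4) rel_canonical_atoms by (auto simp: truthful_def)
  also have "\<dots> \<longleftrightarrow> Box \<pi> f \<in> A"
  proof
    assume all: "\<forall>B. (A, B) \<in> rel canonical \<pi> \<longrightarrow> f \<in> B"
    show "Box \<pi> f \<in> A"
    proof (rule ccontr)
      assume "Box \<pi> f \<notin> A"
      then obtain B where "atom B" and "f \<notin> B" and "dia_consistent \<pi> A B"
        using Box_witness[OF A assms(1)] by blast
      with A all assms(2) show False
        unfolding rel_complete_def by blast
    qed
  qed (use assms(3) in \<open>auto simp: Box_sound_def\<close>)
  finally show "sat canonical A (Box \<pi> f) \<longleftrightarrow> Box \<pi> f \<in> A" .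
qed

lemma truthful_BoxC:
  assumes "BoxC \<pi> f \<in> C" and "rel_complete \<pi>" and "BoxC_sound \<pi>" and "truthful f"
  shows "truthful (BoxC \<pi> f)"
  unfolding truthful_def
proof (intro allI impI)
  fix B
  assume B: "atom B"
  have "sat canonical B (BoxC \<pi> f) \<longleftrightarrow> (\<forall>A. (A, B) \<in> rel canonical \<pi> \<longrightarrow> f \<in> A)"
    using assms(4) rel_canonical_atoms by (auto simp: truthful_def)
  also have "\<dots> \<longleftrightarrow> BoxC \<pi> f \<in> B"
  proof
    assume all: "\<forall>A. (A, B) \<in> rel canonical \<pi> \<longrightarrow> f \<in> A"
    show "BoxC \<pi> f \<in> B"
    proof (rule ccontr)
      assume "BoxC \<pi> f \<notin> B"
      then obtain A where "atom A" and "f \<notin> A" and "dia_consistent \<pi> A B"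
        using BoxC_witness[OF B assms(1)] by blast
      with B all assms(2) show False
        unfolding rel_complete_def by blast
    qed
  qed (use assms(3) in \<open>auto simp: BoxC_sound_def\<close>)
  finally show "sat canonical B (BoxC \<pi> f) \<longleftrightarrow> BoxC \<pi> f \<in> B" .
qed

(* Only tests need this restriction: the truth lemma covers a test formula only if it lies in C. *)
definition occurs :: "('p, 'a) pg \<Rightarrow> bool" where
  "occurs \<pi> \<longleftrightarrow> (\<exists>f. Box \<pi> f \<in> C \<or> BoxC \<pi> f \<in> C)"

lemma occurs_Seq: "occurs (Seq p q) \<Longrightarrow> occurs p \<and> occurs q"
proof -
  assume "occurs (Seq p q)"
  then obtain f where "fl_succ (Box (Seq p q) f) \<subseteq> C \<or> fl_succ (BoxC (Seq p q) f) \<subseteq> C"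
    using fl_succ_closed unfolding occurs_def by blast
  then show ?thesis
    unfolding occurs_def by (simp; blast)
qed

lemma occurs_Ch: "occurs (Ch p q) \<Longrightarrow> occurs p \<and> occurs q"
proof -
  assume "occurs (Ch p q)"
  then obtain f where "fl_succ (Box (Ch p q) f) \<subseteq> C \<or> fl_succ (BoxC (Ch p q) f) \<subseteq> C"
    using fl_succ_closed unfolding occurs_def by blast
  then show ?thesis
    unfolding occurs_def by (simp; blast)
qed

lemma occurs_Star: "occurs (Star p) \<Longrightarrow> occurs p"
proof -
  assume "occurs (Star p)"
  then obtain f where "fl_succ (Box (Star p) f) \<subseteq> C \<or> fl_succ (BoxC (Star p) f) \<subseteq> C"
    using fl_succ_closed unfolding occurs_def by blast
  then show ?thesis
    unfolding occurs_def by (simp; blast)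
qed

lemma occurs_Test: "occurs (Test g) \<Longrightarrow> g \<in> C"
  unfolding occurs_def by (auto dest!: fl_succ_closed)

lemma truth_lemma:
  shows "f \<in> C \<Longrightarrow> truthful f"
    and "occurs \<pi> \<Longrightarrow> rel_complete \<pi> \<and> Box_sound \<pi> \<and> BoxC_sound \<pi>"
proof (induction f and \<pi>)
  case Bot
  show ?case
    by (rule truthful_Bot)
next
  case (Atom p)
  show ?case
    by (simp add: truthful_def)
next
  case (Imp f g)
  have "f \<in> C" and "g \<in> C"
    using fl_succ_closed[OF Imp.prems] by auto
  with Imp show ?case
    by (blast intro: truthful_Imp)
next
  case (Box \<pi> f)
  have "occurs \<pi>"
    using Box.prems by (auto simp: occurs_def)
  moreover have "f \<in> C"
    using fl_succ_closed[OF Box.prems] fl_succ_Box_body by blast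
  ultimately show ?case
    using Box by (blast intro: truthful_Box)
next
  case (BoxC \<pi> f)
  have "occurs \<pi>"
    using BoxC.prems by (auto simp: occurs_def)
  moreover have "f \<in> C"
    using fl_succ_closed[OF BoxC.prems] fl_succ_BoxC_body by blast
  ultimately show ?case
    using BoxC by (blast intro: truthful_BoxC)
next
  case (At a)
  show ?case
    by (simp add: rel_complete_At Box_sound_At BoxC_sound_At)
next
  case (Seq p q)
  then have "occurs p" and "occurs q"
    using occurs_Seq by blast+
  with Seq.IH show ?case
    by (simp add: rel_complete_Seq Box_sound_Seq BoxC_sound_Seq)
next
  case (Ch p q)
  then have "occurs p" and "occurs q"
    using occurs_Ch by blast+
  with Ch.IH show ?case
    by (simp add: rel_complete_Ch Box_sound_Ch BoxC_sound_Ch)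
next
  case (Star p)
  then have "occurs p"
    using occurs_Star by blast
  with Star.IH show ?case
    by (simp add: rel_complete_Star Box_sound_Star BoxC_sound_Star)
next
  case (Test g)
  then have "g \<in> C"
    using occurs_Test by blast
  with Test.IH show ?case
    by (simp add: rel_complete_Test Box_sound_Test BoxC_sound_Test)
qed

lemma canonical_countermodel:
  assumes "finite \<Gamma>" and "finite \<Delta>" and "\<Gamma> \<union> \<Delta> \<subseteq> C" and "\<not> prov \<Gamma> \<Delta>"
  obtains A where "atom A" and "\<forall>f\<in>\<Gamma>. sat canonical A f" and "\<forall>g\<in>\<Delta>. \<not> sat canonical A g"
proof -
  obtain A where A: "atom A" and unprov: "\<not> prov (\<Gamma> \<union> A) (\<Delta> \<union> (C - A))"
    using atom_extend[OF assms(1,2,4)] by blast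
  have fin: "finite (\<Gamma> \<union> A)" "finite (\<Delta> \<union> (C - A))"
    using assms(1,2) atom_finite[OF A] by auto
  have sat: "sat canonical A f \<longleftrightarrow> f \<in> A" if "f \<in> C" for f
    using truth_lemma(1)[OF that] A by (simp add: truthful_def)
  have "f \<in> A" if "f \<in> \<Gamma>" for f
    using unprov prov_mem[OF fin, of f] that assms(3) by auto
  moreover have "g \<notin> A" if "g \<in> \<Delta>" for g
    using unprov prov_mem[OF fin, of g] that by auto
  ultimately show thesis
    using that[OF A] sat assms(3) by blast
qed

end

lemma fl_closed_FL:
  assumes "set cs = \<Union> (FL ` S)"
  shows "fl_closed cs"
proof
  fix X
  assume "X \<in> set cs"
  then obtain f where "f \<in> S" and "X \<in> FL f"
    using assms by auto
  then show "fl_succ X \<subseteq> set cs"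
    using FL_succ_closed(1)[OF \<open>X \<in> FL f\<close>] assms by auto
qed

theorem mainTheorem2:
  fixes \<Gamma> \<Delta> :: "('p, 'a) fm set"
  assumes "finite \<Gamma>" and "finite \<Delta>"
    and "valid \<Gamma> \<Delta>"
  shows "prov \<Gamma> \<Delta>"
proof (rule ccontr)
  assume unprov: "\<not> prov \<Gamma> \<Delta>"
  have "finite (\<Union> (FL ` (\<Gamma> \<union> \<Delta>)))"
    using assms(1,2) finite_FL(1) by blast
  then obtain cs where cs: "set cs = \<Union> (FL ` (\<Gamma> \<union> \<Delta>))"
    by (metis finite_list)
  interpret fl_closed cs
    using cs by (rule fl_closed_FL)
  have "\<Gamma> \<union> \<Delta> \<subseteq> C"
    unfolding cs by auto
  then obtain A where A: "atom A"
    and \<Gamma>: "\<forall>f\<in>\<Gamma>. sat canonical A f" and \<Delta>: "\<forall>g\<in>\<Delta>. \<not> sat canonical A g"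
    by (rule canonical_countermodel[OF assms(1,2) _ unprov])
  have "is_model canonical" and "A \<in> W canonical"
    using A by (auto simp: is_model_def)
  moreover have "\<forall>(M :: (('p, 'a) fm set, 'p, 'a) model) w. is_model M \<longrightarrow> w \<in> W M \<longrightarrow>
      (\<forall>f\<in>\<Gamma>. sat M w f) \<longrightarrow> (\<exists>g\<in>\<Delta>. sat M w g)"
    using assms(3) by (simp add: valid_def valid_over_def)
  ultimately have "\<exists>g\<in>\<Delta>. sat canonical A g"
    using \<Gamma> by blast
  with \<Delta> show False
    by blast
qed

end
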